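(* Let $U\subseteq\mathbb{R}^4$ be open with coordinates $(x^1,x^2,x^3,x^4)$ and let $a,b,p,q,s$ be real constants with $a^2+b^2\neq0$. Consider the Lorentzian metric $$g=2\,dx^1dx^4+(dx^2)^2+(dx^3)^2+\Big(x^4\big(a(x^2)^2+b(x^3)^2\big)+p(x^2)^2+2qx^2x^3+s(x^3)^2\Big)(dx^4)^2$$ on $U$. Then: (a) $(U,g)$ is Einstein if and only if it is Ricci flat, if and only if $b=-a$ and $s=-p$; (b) $(U,g)$ is conformally flat if and only if $b=a$, $s=p$ and $q=0$.
   Context: Einstein means $\varrho=c\,g$ for a real constant $c$, where $\varrho$ is the Ricci tensor; Ricci flat means $\varrho=0$; conformally flat means the Weyl tensor $W_{ijkh}=R_{ijkh}-\frac12(g_{ik}\varrho_{jh}+g_{jh}\varrho_{ik}-g_{ih}\varrho_{jk}-g_{jk}\varrho_{ih})+\frac{\tau}{6}(g_{ik}g_{jh}-g_{ih}g_{jk})$ vanishes identically, $\tau$ the scalar curvature. *)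

theory Defs
  imports "HOL-Analysis.Analysis"
begin

text \<open>Points of R^4 are vectors of type real^4; coordinate indices are elements of the
  finite type 4.  NOTE: numerals in type 4 are taken mod 4, so the fourth coordinate
  index, written 4 below, is the same element as 0; the indices 1,2,3,4 are pairwise distinct.
  A (pseudo-)metric field is given by its components g x i j = g(d_i, d_j) at x.\<close>

type_synonym metric4 = "real^4 \<Rightarrow> 4 \<Rightarrow> 4 \<Rightarrow> real"

definition partial4 :: "4 \<Rightarrow> (real^4 \<Rightarrow> real) \<Rightarrow> real^4 \<Rightarrow> real" where
  "partial4 i f x = deriv (\<lambda>t. f (x + t *\<^sub>R axis i 1)) 0"

definition ginv :: "metric4 \<Rightarrow> real^4 \<Rightarrow> 4 \<Rightarrow> 4 \<Rightarrow> real" where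
  "ginv g x i j = matrix_inv (\<chi> k l. g x k l) $ i $ j"

definition christoffel :: "metric4 \<Rightarrow> real^4 \<Rightarrow> 4 \<Rightarrow> 4 \<Rightarrow> 4 \<Rightarrow> real" where
  "christoffel g x k i j = (1/2) * (\<Sum>l\<in>UNIV. ginv g x k l *
      (partial4 i (\<lambda>y. g y j l) x + partial4 j (\<lambda>y. g y i l) x - partial4 l (\<lambda>y. g y i j) x))"

text \<open>Curvature operator components: R(d_i,d_j) d_k = sum_l R^l_{kij} d_l, with
  R(X,Y) = nabla_X nabla_Y - nabla_Y nabla_X - nabla_[X,Y].\<close>
definition riem13 :: "metric4 \<Rightarrow> real^4 \<Rightarrow> 4 \<Rightarrow> 4 \<Rightarrow> 4 \<Rightarrow> 4 \<Rightarrow> real" where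
  "riem13 g x l k i j =
     partial4 i (\<lambda>y. christoffel g y l j k) x - partial4 j (\<lambda>y. christoffel g y l i k) x
     + (\<Sum>m\<in>UNIV. christoffel g x l i m * christoffel g x m j k
                  - christoffel g x l j m * christoffel g x m i k)"

text \<open>Curvature tensor R_{ijkh} = g(R(d_i,d_j) d_h, d_k), the convention for which the
  given Weyl tensor formula is correct (Ricci tensor = contraction of R_{ijkh} over i,k).\<close>
definition riem :: "metric4 \<Rightarrow> real^4 \<Rightarrow> 4 \<Rightarrow> 4 \<Rightarrow> 4 \<Rightarrow> 4 \<Rightarrow> real" where
  "riem g x i j k h = (\<Sum>l\<in>UNIV. g x k l * riem13 g x l h i j)"

definition ricci :: "metric4 \<Rightarrow> real^4 \<Rightarrow> 4 \<Rightarrow> 4 \<Rightarrow> real" where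
  "ricci g x j h = (\<Sum>i\<in>UNIV. \<Sum>k\<in>UNIV. ginv g x i k * riem g x i j k h)"

definition scal :: "metric4 \<Rightarrow> real^4 \<Rightarrow> real" where
  "scal g x = (\<Sum>j\<in>UNIV. \<Sum>h\<in>UNIV. ginv g x j h * ricci g x j h)"

definition weyl :: "metric4 \<Rightarrow> real^4 \<Rightarrow> 4 \<Rightarrow> 4 \<Rightarrow> 4 \<Rightarrow> 4 \<Rightarrow> real" where
  "weyl g x i j k h = riem g x i j k h
     - (1/2) * (g x i k * ricci g x j h + g x j h * ricci g x i k
                - g x i h * ricci g x j k - g x j k * ricci g x i h)
     + (scal g x / 6) * (g x i k * g x j h - g x i h * g x j k)"

definition einstein_on :: "metric4 \<Rightarrow> (real^4) set \<Rightarrow> bool" where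
  "einstein_on g U \<longleftrightarrow> (\<exists>c::real. \<forall>x\<in>U. \<forall>i j. ricci g x i j = c * g x i j)"

definition ricci_flat_on :: "metric4 \<Rightarrow> (real^4) set \<Rightarrow> bool" where
  "ricci_flat_on g U \<longleftrightarrow> (\<forall>x\<in>U. \<forall>i j. ricci g x i j = 0)"

definition conformally_flat_on :: "metric4 \<Rightarrow> (real^4) set \<Rightarrow> bool" where
  "conformally_flat_on g U \<longleftrightarrow> (\<forall>x\<in>U. \<forall>i j k h. weyl g x i j k h = 0)"

definition walkerF :: "real \<Rightarrow> real \<Rightarrow> real \<Rightarrow> real \<Rightarrow> real \<Rightarrow> real^4 \<Rightarrow> real" where
  "walkerF a b p q s x = x$4 * (a * (x$2)^2 + b * (x$3)^2) + p * (x$2)^2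
      + 2 * q * x$2 * x$3 + s * (x$3)^2"

definition walker_metric :: "real \<Rightarrow> real \<Rightarrow> real \<Rightarrow> real \<Rightarrow> real \<Rightarrow> metric4" where
  "walker_metric a b p q s x i j =
     (if (i = 1 \<and> j = 4) \<or> (i = 4 \<and> j = 1) then 1
      else if i = j \<and> (i = 2 \<or> i = 3) then 1
      else if i = 4 \<and> j = 4 then walkerF a b p q s x
      else 0)"

end

theory Submission imports Defs begin

text \<open>
  All components of \<open>g\<close> are constant except \<open>g\<^sub>4\<^sub>4 = F\<close>, so its inverse is explicit and
  every Christoffel symbol is a polynomial in \<open>x\<^sup>2, x\<^sup>3, x\<^sup>4\<close> of the same shape as \<open>F\<close>; the
  curvature can therefore be computed in closed form. The only non-zero Ricci component is
  \<open>\<rho>\<^sub>4\<^sub>4 = -((a + b) x\<^sup>4 + p + s)\<close>, so the scalar curvature vanishes, and since \<open>g\<^sub>1\<^sub>4 = 1\<close>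
  while \<open>\<rho>\<^sub>1\<^sub>4 = 0\<close> an Einstein metric is Ricci flat. The Weyl components
  \<open>W\<^sub>2\<^sub>4\<^sub>2\<^sub>4 = ((b - a) x\<^sup>4 + s - p) / 2\<close> and \<open>W\<^sub>2\<^sub>4\<^sub>3\<^sub>4 = -q\<close> force \<open>b = a, s = p, q = 0\<close>, and for these
  values the whole Weyl tensor vanishes. An affine function of \<open>x\<^sup>4\<close> vanishes on a non-empty
  open set only if both its coefficients are zero.
\<close>

lemma matrix_inv_eqI:
  fixes A :: "'a::semiring_1^'n^'m" and B :: "'a^'m^'n"
  assumes "A ** B = mat 1" and "B ** A = mat 1"
  shows "matrix_inv A = B"
proof -
  have inverse_exists: "\<exists>A'. A ** A' = mat 1 \<and> A' ** A = mat 1"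
    using assms by blast
  then obtain A' where "A ** A' = mat 1" and "matrix_inv A = A'"
    using someI_ex[OF inverse_exists] unfolding matrix_inv_def by blast
  moreover have "B = B ** (A ** A')"
    using \<open>A ** A' = mat 1\<close> by simp
  ultimately show ?thesis
    by (metis assms(2) matrix_mul_assoc matrix_mul_lid)
qed

lemma affine_coord_vanishes_on_open_iff:
  fixes U :: "(real^'n) set"
  assumes "open U" and "U \<noteq> {}"
  shows "(\<forall>x\<in>U. c * x$i + d = 0) \<longleftrightarrow> c = 0 \<and> d = 0"
proof
  assume vanish: "\<forall>x\<in>U. c * x$i + d = 0"
  obtain x where "x \<in> U"
    using assms(2) by blast
  then obtain e where "e > 0" and "ball x e \<subseteq> U"
    using assms(1) open_contains_ball by blast
  define y where "y = x + (e/2) *\<^sub>R axis i 1"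
  have "dist x y < e"
    using \<open>e > 0\<close> by (simp add: y_def dist_norm norm_axis_1)
  then have "y \<in> U"
    using \<open>ball x e \<subseteq> U\<close> by auto
  have "c * (y$i - x$i) = (c * y$i + d) - (c * x$i + d)"
    by (simp add: algebra_simps)
  also have "\<dots> = 0"
    using vanish \<open>x \<in> U\<close> \<open>y \<in> U\<close> by simp
  finally have "c = 0"
    using \<open>e > 0\<close> by (simp add: y_def)
  moreover have "c * x$i + d = 0"
    using vanish \<open>x \<in> U\<close> by blast
  ultimately show "c = 0 \<and> d = 0"
    by simp
qed simp

lemma partial4_const [simp]: "partial4 i (\<lambda>y. c) x = 0"
  unfolding partial4_def by simp

lemma partial4_if: "partial4 i (if P then f else g) x = (if P then partial4 i f x else partial4 i g x)"
  by simp

lemma if_fun_apply: "(if P then f else g) x = (if P then f x else g x)"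
  by simp

text \<open>All components of the metric and all its Christoffel symbols lie in this family of
  polynomials, which is closed under partial derivatives.\<close>
definition walker_poly ::
  "real \<Rightarrow> real \<Rightarrow> real \<Rightarrow> real \<Rightarrow> real \<Rightarrow> real \<Rightarrow> real \<Rightarrow> real \<Rightarrow> real \<Rightarrow> real \<Rightarrow> real \<Rightarrow> real^4 \<Rightarrow> real"
where
  "walker_poly c0 c2 c3 c4 c22 c33 c23 c42 c43 c422 c433 y =
     c0 + c2 * y$2 + c3 * y$3 + c4 * y$4 + c22 * (y$2)^2 + c33 * (y$3)^2 + c23 * y$2 * y$3
     + c42 * y$4 * y$2 + c43 * y$4 * y$3 + c422 * y$4 * (y$2)^2 + c433 * y$4 * (y$3)^2"

lemma partial4_walker_poly:
  "partial4 i (walker_poly c0 c2 c3 c4 c22 c33 c23 c42 c43 c422 c433) x =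
     (if i = 2 then walker_poly c2 (2*c22) c23 c42 0 0 0 (2*c422) 0 0 0 x
      else if i = 3 then walker_poly c3 c23 (2*c33) c43 0 0 0 0 (2*c433) 0 0 x
      else if i = 4 then walker_poly c4 c42 c43 0 c422 c433 0 0 0 0 0 x
      else 0)"
  unfolding partial4_def
  using exhaust_4[of i]
  apply (elim disjE)
  apply (simp_all add: walker_poly_def axis_def)
  apply (rule DERIV_imp_deriv; (rule derivative_eq_intros refl | simp)+)+
  done

lemma walkerF_eq_walker_poly: "walkerF a b p q s = walker_poly 0 0 0 0 p s (2*q) 0 0 a b"
  by (simp add: fun_eq_iff walkerF_def walker_poly_def algebra_simps)

lemma partial4_walker_metric:
  "partial4 i (\<lambda>y. walker_metric a b p q s y j l) x =
     (if j = 4 \<and> l = 4 then partial4 i (walker_poly 0 0 0 0 p s (2*q) 0 0 a b) x else 0)"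
  using exhaust_4[of j] exhaust_4[of l]
  by (elim disjE) (simp_all add: walker_metric_def walkerF_eq_walker_poly)

definition walker_ginv :: "real \<Rightarrow> 4 \<Rightarrow> 4 \<Rightarrow> real" where
  "walker_ginv F i j =
     (if i = 1 \<and> j = 1 then -F
      else if (i = 1 \<and> j = 4) \<or> (i = 4 \<and> j = 1) then 1
      else if i = j \<and> (i = 2 \<or> i = 3) then 1
      else 0)"

lemma ginv_walker_metric:
  "ginv (walker_metric a b p q s) x i j = walker_ginv (walkerF a b p q s x) i j"
proof -
  let ?G = "\<chi> k l. walker_metric a b p q s x k l"
  let ?H = "\<chi> k l. walker_ginv (walkerF a b p q s x) k l"
  have "?G ** ?H = mat 1" and "?H ** ?G = mat 1"
    by (simp_all add: vec_eq_iff matrix_matrix_mult_def mat_def sum_4 forall_4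
        walker_metric_def walker_ginv_def)
  then show ?thesis
    unfolding ginv_def by (simp add: matrix_inv_eqI)
qed

definition walker_christoffel :: "real \<Rightarrow> real \<Rightarrow> real \<Rightarrow> real \<Rightarrow> real \<Rightarrow> 4 \<Rightarrow> 4 \<Rightarrow> 4 \<Rightarrow> real^4 \<Rightarrow> real"
where
  "walker_christoffel a b p q s k i j =
     (if k = 1 \<and> i = 4 \<and> j = 4 then walker_poly 0 0 0 0 (a/2) (b/2) 0 0 0 0 0
      else if k = 1 \<and> ((i = 4 \<and> j = 2) \<or> (i = 2 \<and> j = 4)) then walker_poly 0 p q 0 0 0 0 a 0 0 0
      else if k = 1 \<and> ((i = 4 \<and> j = 3) \<or> (i = 3 \<and> j = 4)) then walker_poly 0 q s 0 0 0 0 0 b 0 0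
      else if k = 2 \<and> i = 4 \<and> j = 4 then walker_poly 0 (-p) (-q) 0 0 0 0 (-a) 0 0 0
      else if k = 3 \<and> i = 4 \<and> j = 4 then walker_poly 0 (-q) (-s) 0 0 0 0 0 (-b) 0 0
      else (\<lambda>_. 0))"

lemma christoffel_walker_metric:
  "christoffel (walker_metric a b p q s) x k i j = walker_christoffel a b p q s k i j x"
  unfolding christoffel_def ginv_walker_metric partial4_walker_metric partial4_walker_poly
  using exhaust_4[of k] exhaust_4[of i] exhaust_4[of j]
  by (elim disjE)
    (simp_all add: sum_4 walker_christoffel_def if_fun_apply walker_ginv_def walker_poly_def
      walkerF_def)

lemma riem13_walker_metric:
  "riem13 (walker_metric a b p q s) x l k i j =
     partial4 i (walker_christoffel a b p q s l j k) x
     - partial4 j (walker_christoffel a b p q s l i k) x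
     + (\<Sum>m\<in>UNIV. walker_christoffel a b p q s l i m x * walker_christoffel a b p q s m j k x
                  - walker_christoffel a b p q s l j m x * walker_christoffel a b p q s m i k x)"
  unfolding riem13_def christoffel_walker_metric by (simp add: fun_eq_iff)

lemmas walker_curvature_simps =
  riem_def riem13_walker_metric walker_christoffel_def partial4_if if_fun_apply
  partial4_walker_poly walker_poly_def walker_metric_def walkerF_def sum_4

lemma ricci_walker_metric:
  "ricci (walker_metric a b p q s) x j h =
     (if j = 4 \<and> h = 4 then -((a + b) * x$4 + p + s) else 0)"
  unfolding ricci_def ginv_walker_metric
  using exhaust_4[of j] exhaust_4[of h]
  by (elim disjE) (simp_all add: walker_curvature_simps walker_ginv_def algebra_simps)

lemma scal_walker_metric: "scal (walker_metric a b p q s) x = 0"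
  unfolding scal_def ricci_walker_metric ginv_walker_metric
  by (simp add: sum_4 walker_ginv_def)

lemma weyl_walker_metric_2424:
  "weyl (walker_metric a b p q s) x 2 4 2 4 = ((b - a) * x$4 + s - p) / 2"
  unfolding weyl_def scal_walker_metric ricci_walker_metric
  by (simp add: walker_curvature_simps field_simps)

lemma weyl_walker_metric_2434: "weyl (walker_metric a b p q s) x 2 4 3 4 = -q"
  unfolding weyl_def scal_walker_metric ricci_walker_metric
  by (simp add: walker_curvature_simps)

lemma weyl_walker_metric_eq_0: "weyl (walker_metric a a p 0 p) x i j k h = 0"
  unfolding weyl_def scal_walker_metric ricci_walker_metric
  using exhaust_4[of i] exhaust_4[of j] exhaust_4[of k] exhaust_4[of h]
  by (elim disjE) (simp_all add: walker_curvature_simps)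

lemma einstein_on_walker_metric_iff:
  assumes "U \<noteq> {}"
  shows "einstein_on (walker_metric a b p q s) U \<longleftrightarrow> ricci_flat_on (walker_metric a b p q s) U"
proof
  assume "einstein_on (walker_metric a b p q s) U"
  then obtain c where c: "\<forall>x\<in>U. \<forall>i j. ricci (walker_metric a b p q s) x i j
                                        = c * walker_metric a b p q s x i j"
    unfolding einstein_on_def by blast
  obtain x where "x \<in> U"
    using assms by blast
  with c have "ricci (walker_metric a b p q s) x 1 4 = c * walker_metric a b p q s x 1 4"
    by blast
  then have "c = 0"
    by (simp add: ricci_walker_metric walker_metric_def)
  with c show "ricci_flat_on (walker_metric a b p q s) U"
    unfolding ricci_flat_on_def by simp
qed (auto simp: ricci_flat_on_def einstein_on_def)

lemma ricci_flat_on_walker_metric_iff: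
  assumes "open U" and "U \<noteq> {}"
  shows "ricci_flat_on (walker_metric a b p q s) U \<longleftrightarrow> b = -a \<and> s = -p"
proof -
  have "ricci_flat_on (walker_metric a b p q s) U \<longleftrightarrow> (\<forall>x\<in>U. (a + b) * x$4 + (p + s) = 0)"
    unfolding ricci_flat_on_def ricci_walker_metric by (intro ball_cong) auto
  also have "\<dots> \<longleftrightarrow> b = -a \<and> s = -p"
    using affine_coord_vanishes_on_open_iff[OF assms] by auto
  finally show ?thesis .
qed

lemma conformally_flat_on_walker_metric_iff:
  assumes "open U" and "U \<noteq> {}"
  shows "conformally_flat_on (walker_metric a b p q s) U \<longleftrightarrow> b = a \<and> s = p \<and> q = 0"
proof
  assume flat: "conformally_flat_on (walker_metric a b p q s) U"
  have "(b - a) * x$4 + (s - p) = 0" if "x \<in> U" for x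
    using flat that weyl_walker_metric_2424[of a b p q s x]
    unfolding conformally_flat_on_def by (simp add: add_diff_eq)
  moreover have "q = 0"
  proof -
    obtain x where "x \<in> U"
      using assms(2) by blast
    then show ?thesis
      using flat weyl_walker_metric_2434[of a b p q s x]
      unfolding conformally_flat_on_def by simp
  qed
  ultimately show "b = a \<and> s = p \<and> q = 0"
    using affine_coord_vanishes_on_open_iff[OF assms, of "b - a" 4 "s - p"] by auto
qed (auto simp: conformally_flat_on_def weyl_walker_metric_eq_0)

theorem mainTheorem2:
  fixes U :: "(real^4) set" and a b p q s :: real
  assumes "open U" and "U \<noteq> {}" and "a^2 + b^2 \<noteq> 0"
  shows "(einstein_on (walker_metric a b p q s) U \<longleftrightarrow> ricci_flat_on (walker_metric a b p q s) U)
       \<and> (ricci_flat_on (walker_metric a b p q s) U \<longleftrightarrow> b = -a \<and> s = -p)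
       \<and> (conformally_flat_on (walker_metric a b p q s) U \<longleftrightarrow> b = a \<and> s = p \<and> q = 0)"
  using einstein_on_walker_metric_iff[OF assms(2)]
    ricci_flat_on_walker_metric_iff[OF assms(1,2)]
    conformally_flat_on_walker_metric_iff[OF assms(1,2)]
  by blast

end
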